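(* For an integer $n\ge 3$ and a finite simple graph $H$ without a universal vertex, $${\rm dim}_s(K_{n,n}^{-M}\diamond H)=2n\sum_{j=1}^{k(H)}t_j(H)-n\,k(H).$$
   Context: The modular product $G\diamond H$ has vertex set $V(G)\times V(H)$; distinct vertices $(g,h)$ and $(g',h')$ are adjacent iff ($g=g'$ and $hh'\in E(H)$), or ($gg'\in E(G)$ and $h=h'$), or ($gg'\in E(G)$ and $hh'\in E(H)$), or ($g\neq g'$, $h\neq h'$, $gg'\notin E(G)$ and $hh'\notin E(H)$). $K_{n,n}^{-M}$ is the complete bipartite graph $K_{n,n}$ with a perfect matching removed. A vertex is universal if its closed neighborhood is the whole vertex set. Vertices $h,h'$ are twins if $N_H[h]=N_H[h']$. A $\gamma_H$-pair is a set $\{h,h'\}$ of two distinct vertices with $N_H[h]\cap N_H[h']=\emptyset$ and $N_H[h]\cup N_H[h']=V(H)$. Let $T_1(H),\dots,T_{k(H)}(H)$ be the partition of $V(H)$ in which each twin class of vertices not belonging to any $\gamma_H$-pair is one part, and for each $\gamma_H$-pair $\{h,h'\}$ the union of the twin classes of $h$ and of $h'$ is one part; $t_j(H)=|T_j(H)|$. ${\rm dim}_s(X)$ is the strong metric dimension: the minimum size of $S\subseteq V(X)$ such that for all distinct $x,y$ some $z\in S$ has $d_X(y,z)=d_X(y,x)+d_X(x,z)$ or $d_X(x,z)=d_X(x,y)+d_X(y,z)$. *)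

theory Defs
  imports Main "HOL-Library.Extended_Nat"
begin

definition simple_graph :: "'a set \<Rightarrow> ('a \<Rightarrow> 'a \<Rightarrow> bool) \<Rightarrow> bool" where
  "simple_graph V E \<longleftrightarrow> finite V \<and> (\<forall>x y. E x y \<longrightarrow> x \<in> V \<and> y \<in> V)
     \<and> (\<forall>x y. E x y \<longrightarrow> E y x) \<and> (\<forall>x. \<not> E x x)"

inductive walk :: "('a \<Rightarrow> 'a \<Rightarrow> bool) \<Rightarrow> nat \<Rightarrow> 'a \<Rightarrow> 'a \<Rightarrow> bool" for E where
  walk0: "walk E 0 x x"
| walkS: "E x y \<Longrightarrow> walk E k y z \<Longrightarrow> walk E (Suc k) x z"

text \<open>Graph distance; infinite if no walk exists.\<close>
definition gdist :: "'a set \<Rightarrow> ('a \<Rightarrow> 'a \<Rightarrow> bool) \<Rightarrow> 'a \<Rightarrow> 'a \<Rightarrow> enat" where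
  "gdist V E x y = (INF k \<in> {k. walk (\<lambda>u v. u \<in> V \<and> v \<in> V \<and> E u v) k x y}. enat k)"

definition strong_resolving :: "'a set \<Rightarrow> ('a \<Rightarrow> 'a \<Rightarrow> bool) \<Rightarrow> 'a set \<Rightarrow> bool" where
  "strong_resolving V E S \<longleftrightarrow> S \<subseteq> V \<and>
     (\<forall>x\<in>V. \<forall>y\<in>V. x \<noteq> y \<longrightarrow>
        (\<exists>z\<in>S. gdist V E y z = gdist V E y x + gdist V E x z
              \<or> gdist V E x z = gdist V E x y + gdist V E y z))"

definition strong_metric_dim :: "'a set \<Rightarrow> ('a \<Rightarrow> 'a \<Rightarrow> bool) \<Rightarrow> nat" where
  "strong_metric_dim V E = (LEAST k. \<exists>S. strong_resolving V E S \<and> card S = k)"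

definition mod_prod_adj :: "('a \<Rightarrow> 'a \<Rightarrow> bool) \<Rightarrow> ('b \<Rightarrow> 'b \<Rightarrow> bool)
    \<Rightarrow> ('a \<times> 'b) \<Rightarrow> ('a \<times> 'b) \<Rightarrow> bool" where
  "mod_prod_adj EG EH = (\<lambda>(g,h) (g',h'). (g,h) \<noteq> (g',h') \<and>
     ((g = g' \<and> EH h h') \<or> (EG g g' \<and> h = h') \<or> (EG g g' \<and> EH h h')
      \<or> (g \<noteq> g' \<and> h \<noteq> h' \<and> \<not> EG g g' \<and> \<not> EH h h')))"

text \<open>K_{n,n} minus a perfect matching: vertices (i,b) with i<n, b a side;
  (i,b) ~ (j,c) iff b \<noteq> c and i \<noteq> j.\<close>
definition Knn_M_verts :: "nat \<Rightarrow> (nat \<times> bool) set" where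
  "Knn_M_verts n = {..<n} \<times> UNIV"

definition Knn_M_adj :: "nat \<Rightarrow> (nat \<times> bool) \<Rightarrow> (nat \<times> bool) \<Rightarrow> bool" where
  "Knn_M_adj n = (\<lambda>(i,b) (j,c). i < n \<and> j < n \<and> b \<noteq> c \<and> i \<noteq> j)"

definition cnbh :: "'a set \<Rightarrow> ('a \<Rightarrow> 'a \<Rightarrow> bool) \<Rightarrow> 'a \<Rightarrow> 'a set" where
  "cnbh V E h = insert h {x \<in> V. E h x}"

definition universal :: "'a set \<Rightarrow> ('a \<Rightarrow> 'a \<Rightarrow> bool) \<Rightarrow> 'a \<Rightarrow> bool" where
  "universal V E h \<longleftrightarrow> cnbh V E h = V"

definition twin_class :: "'a set \<Rightarrow> ('a \<Rightarrow> 'a \<Rightarrow> bool) \<Rightarrow> 'a \<Rightarrow> 'a set" where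
  "twin_class V E h = {x \<in> V. cnbh V E x = cnbh V E h}"

definition gamma_pair :: "'a set \<Rightarrow> ('a \<Rightarrow> 'a \<Rightarrow> bool) \<Rightarrow> 'a \<Rightarrow> 'a \<Rightarrow> bool" where
  "gamma_pair V E h h' \<longleftrightarrow> h \<in> V \<and> h' \<in> V \<and> h \<noteq> h' \<and>
     cnbh V E h \<inter> cnbh V E h' = {} \<and> cnbh V E h \<union> cnbh V E h' = V"

text \<open>The partition T_1(H),...,T_k(H), represented as a set of parts.\<close>
definition T_parts :: "'a set \<Rightarrow> ('a \<Rightarrow> 'a \<Rightarrow> bool) \<Rightarrow> 'a set set" where
  "T_parts V E =
     {twin_class V E h | h. h \<in> V \<and> \<not> (\<exists>h'. gamma_pair V E h h')}
   \<union> {twin_class V E h \<union> twin_class V E h' | h h'. gamma_pair V E h h'}"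

end

theory Submission
  imports Defs "HOL-Library.Disjoint_Sets"
begin

text \<open>
  Write \<open>x \<simeq> y\<close> for closed adjacency (\<open>x = y\<close> or \<open>x\<close>, \<open>y\<close> adjacent). The modular
  product is an agreement product: \<open>(g, h) \<simeq> (g', h')\<close> iff (\<open>g \<simeq> g'\<close> \<open>\<longleftrightarrow>\<close> \<open>h \<simeq> h'\<close>).
  So if \<open>g, g'\<close> have equal or complementary closed neighbourhoods in \<open>G\<close>, and so do \<open>h, h'\<close>
  in \<open>H\<close>, then \<open>(g, h)\<close>, \<open>(g', h')\<close> have equal or complementary closed neighbourhoods in the
  product. In \<open>K\<^sub>n\<^sub>,\<^sub>n\<close> minus a perfect matching, \<open>(i, True)\<close> and \<open>(i, False)\<close> have
  complementary closed neighbourhoods, and the parts \<open>T\<^sub>j(H)\<close> are exactly the classes of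
  "equal or complementary closed neighbourhood" in \<open>H\<close>. Hence for each index \<open>i\<close> and part
  \<open>T\<close> the vertices \<open>{(i, True), (i, False)} \<times> T\<close> are pairwise closed twins or at distance 3,
  the diameter of the product; they are mutually maximally distant, so a strong resolving set
  misses at most one of them. Conversely, deleting one vertex \<open>((i, True), h\<^sub>T)\<close> for each \<open>i\<close>
  and \<open>T\<close> leaves a strong resolving set: two deleted vertices are resolved by a suitable vertex
  on the \<open>False\<close> side. Thus \<open>dim\<^sub>s = 2n|V(H)| - n k(H)\<close>, and \<open>|V(H)| = \<Sum>\<^sub>j t\<^sub>j(H)\<close>.
\<close>

section \<open>Walks and distances\<close>

lemma walk_Suc_iff: "walk R (Suc k) x z \<longleftrightarrow> (\<exists>y. R x y \<and> walk R k y z)"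
  by (auto elim: walk.cases intro: walk.intros)

lemma walk_0_iff: "walk R 0 x z \<longleftrightarrow> x = z"
  by (auto elim: walk.cases intro: walk.intros)

lemma walk_trans: "walk R k x y \<Longrightarrow> walk R m y z \<Longrightarrow> walk R (k + m) x z"
  by (induction rule: walk.induct) (auto intro: walk.intros)

lemma walk_rev:
  assumes "symp R" shows "walk R k x y \<Longrightarrow> walk R k y x"
proof (induction rule: walk.induct)
  case (walkS x y k z)
  have "walk R 1 y x" using walkS.hyps(1) assms by (auto simp: walk_Suc_iff walk_0_iff dest: sympD)
  with walk_trans[OF walkS.IH this] show ?case by simp
qed (rule walk0)

lemma gdist_le_walk: "walk (\<lambda>u v. u \<in> V \<and> v \<in> V \<and> E u v) k x y \<Longrightarrow> gdist V E x y \<le> enat k"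
  unfolding gdist_def by (rule INF_lower) simp

lemma walk_if_gdist_less:
  assumes "gdist V E x y < enat k"
  shows "\<exists>m<k. walk (\<lambda>u v. u \<in> V \<and> v \<in> V \<and> E u v) m x y"
proof (rule ccontr)
  assume "\<not> ?thesis"
  hence "enat k \<le> gdist V E x y" unfolding gdist_def
    by (intro INF_greatest) (auto simp: not_less)
  with assms show False by simp
qed

lemma walk_if_gdist_eq:
  assumes "gdist V E x y = enat k"
  shows "walk (\<lambda>u v. u \<in> V \<and> v \<in> V \<and> E u v) k x y"
proof -
  from assms obtain m where m: "m < Suc k" "walk (\<lambda>u v. u \<in> V \<and> v \<in> V \<and> E u v) m x y"
    using walk_if_gdist_less[of V E x y "Suc k"] by auto
  with gdist_le_walk[OF m(2)] assms have "m = k" by simp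
  with m(2) show ?thesis by simp
qed

lemma gdist_self [simp]: "gdist V E x x = 0"
  using gdist_le_walk[of V E 0 x x] by (simp add: walk_0_iff zero_enat_def[symmetric])

lemma gdist_triangle: "gdist V E x z \<le> gdist V E x y + gdist V E y z"
proof (cases "gdist V E x y"; cases "gdist V E y z")
  fix a b assume a: "gdist V E x y = enat a" and b: "gdist V E y z = enat b"
  have "walk (\<lambda>u v. u \<in> V \<and> v \<in> V \<and> E u v) (a + b) x z"
    by (rule walk_trans[OF walk_if_gdist_eq[OF a] walk_if_gdist_eq[OF b]])
  with a b show ?thesis using gdist_le_walk by fastforce
qed simp_all

lemma gdist_sym:
  assumes "symp E" shows "gdist V E x y = gdist V E y x"
proof -
  have le: "gdist V E a b \<le> gdist V E b a" for a b
  proof (cases "gdist V E b a")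
    case (enat k)
    have "symp (\<lambda>u v. u \<in> V \<and> v \<in> V \<and> E u v)" using assms by (auto intro: sympI dest: sympD)
    from walk_rev[OF this walk_if_gdist_eq[OF enat]] enat show ?thesis by (simp add: gdist_le_walk)
  qed simp
  show ?thesis using le[of x y] le[of y x] by simp
qed

lemma gdist_ge_1: "x \<noteq> y \<Longrightarrow> 1 \<le> gdist V E x y"
  using walk_if_gdist_less[of V E x y 1] by (force simp: walk_0_iff one_enat_def not_less[symmetric])

lemma gdist_ge_2:
  assumes "x \<noteq> y" "\<not> (x \<in> V \<and> y \<in> V \<and> E x y)" shows "2 \<le> gdist V E x y"
proof (rule ccontr)
  assume "\<not> ?thesis"
  then obtain m where "m < 2" "walk (\<lambda>u v. u \<in> V \<and> v \<in> V \<and> E u v) m x y"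
    using walk_if_gdist_less[of V E x y 2] by (auto simp: numeral_eq_enat not_le)
  moreover have "m = 0 \<or> m = 1" using \<open>m < 2\<close> by linarith
  ultimately show False using assms by (auto simp: walk_0_iff walk_Suc_iff)
qed

lemma gdist_ge_3:
  assumes "x \<noteq> y" "\<not> (x \<in> V \<and> y \<in> V \<and> E x y)"
    and "\<And>w. w \<in> V \<Longrightarrow> E x w \<Longrightarrow> \<not> E w y"
  shows "3 \<le> gdist V E x y"
proof (rule ccontr)
  assume "\<not> ?thesis"
  then obtain m where "m < 3" "walk (\<lambda>u v. u \<in> V \<and> v \<in> V \<and> E u v) m x y"
    using walk_if_gdist_less[of V E x y 3] by (auto simp: numeral_eq_enat not_le)
  moreover have "m = 0 \<or> m = 1 \<or> m = 2" using \<open>m < 3\<close> by linarith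
  ultimately show False using assms by (auto simp: walk_0_iff walk_Suc_iff numeral_2_eq_2)
qed

lemma gdist_le_1: "x \<in> V \<Longrightarrow> y \<in> V \<Longrightarrow> E\<^sup>=\<^sup>= x y \<Longrightarrow> gdist V E x y \<le> 1"
  using gdist_le_walk[of V E 1 x y] by (auto simp: walk_Suc_iff walk_0_iff one_enat_def)

lemma gdist_le_2:
  assumes "x \<in> V" "w \<in> V" "y \<in> V" "E\<^sup>=\<^sup>= x w" "E\<^sup>=\<^sup>= w y"
  shows "gdist V E x y \<le> 2"
proof -
  have "gdist V E x y \<le> gdist V E x w + gdist V E w y" by (rule gdist_triangle)
  also have "\<dots> \<le> 1 + 1" using assms by (intro add_mono gdist_le_1)
  finally show ?thesis by simp
qed

lemma gdist_le_3:
  assumes "x \<in> V" "w \<in> V" "w' \<in> V" "y \<in> V" "E\<^sup>=\<^sup>= x w" "E\<^sup>=\<^sup>= w w'" "E\<^sup>=\<^sup>= w' y"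
  shows "gdist V E x y \<le> 3"
proof -
  have "gdist V E x y \<le> gdist V E x w + gdist V E w y" by (rule gdist_triangle)
  also have "\<dots> \<le> 1 + 2" using assms by (intro add_mono gdist_le_1 gdist_le_2)
  finally show ?thesis by simp
qed

lemma gdist_eq_add_if_adjacent:
  assumes "symp E" "x \<in> V" "y \<in> V" "z \<in> V" "E x y" "E x z" "\<not> E\<^sup>=\<^sup>= y z"
  shows "gdist V E y z = gdist V E y x + gdist V E x z"
proof -
  have "y \<noteq> x" "x \<noteq> z" using assms(1,5-7) by (auto dest: sympD)
  have "E y x" using assms(1,5) by (rule sympD)
  have "gdist V E y x = 1" "gdist V E x z = 1"
    using assms(2-6) \<open>E y x\<close> \<open>y \<noteq> x\<close> \<open>x \<noteq> z\<close>
    by (simp_all add: antisym gdist_le_1 gdist_ge_1)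
  moreover have "gdist V E y z = 2"
    using assms(2-4,6,7) \<open>E y x\<close> by (intro antisym gdist_le_2[of y V x] gdist_ge_2) auto
  ultimately show ?thesis by simp
qed

section \<open>Maximally distant pairs and strong resolving sets\<close>

definition maximally_distant :: "'a set \<Rightarrow> ('a \<Rightarrow> 'a \<Rightarrow> bool) \<Rightarrow> 'a \<Rightarrow> 'a \<Rightarrow> bool" where
  "maximally_distant V E x y \<longleftrightarrow> (\<forall>w\<in>V. E x w \<longrightarrow> gdist V E w y \<le> gdist V E x y)"

lemma maximally_distant_not_between:
  assumes "symp E" "maximally_distant V E x y" "x \<in> V" "z \<noteq> x"
    and "gdist V E x z \<noteq> \<infinity>" "gdist V E x y \<noteq> \<infinity>"
  shows "gdist V E y z \<noteq> gdist V E y x + gdist V E x z"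
proof
  assume between: "gdist V E y z = gdist V E y x + gdist V E x z"
  obtain a where a: "gdist V E x y = enat a" using assms(6) by auto
  obtain k where k: "gdist V E x z = enat k" using assms(5) by auto
  with assms(4) gdist_ge_1[of x z V E] obtain m where m: "k = Suc m"
    by (cases k) (auto simp: one_enat_def)
  from walk_if_gdist_eq[OF k[unfolded m]] obtain w where w: "w \<in> V" "E x w"
    and walk: "walk (\<lambda>u v. u \<in> V \<and> v \<in> V \<and> E u v) m w z"
    by (auto simp: walk_Suc_iff)
  have "gdist V E y z \<le> gdist V E w y + gdist V E w z"
    using gdist_triangle[of V E y z w] gdist_sym[OF assms(1), of V w y] by simp
  also have "\<dots> \<le> enat a + enat m"
    using assms(2) w a gdist_le_walk[OF walk] unfolding maximally_distant_def by (intro add_mono) auto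
  finally show False using between a k m gdist_sym[OF assms(1), of V x y] by simp
qed

lemma strong_resolving_mutually_maximally_distant:
  assumes "symp E" "strong_resolving V E S"
    and fin: "\<And>a b. a \<in> V \<Longrightarrow> b \<in> V \<Longrightarrow> gdist V E a b \<noteq> \<infinity>"
    and "x \<in> V" "y \<in> V" "x \<noteq> y" "maximally_distant V E x y" "maximally_distant V E y x"
  shows "x \<in> S \<or> y \<in> S"
proof (rule ccontr)
  assume "\<not> ?thesis"
  moreover obtain z where "z \<in> S"
    "gdist V E y z = gdist V E y x + gdist V E x z \<or> gdist V E x z = gdist V E x y + gdist V E y z"
    using assms(2,4-6) unfolding strong_resolving_def by blast
  moreover have "z \<in> V" using \<open>z \<in> S\<close> assms(2) unfolding strong_resolving_def by blast
  ultimately show False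
    using maximally_distant_not_between[OF assms(1,7,4), of z] maximally_distant_not_between[OF assms(1,8,5), of z]
      fin assms(4,5) by auto
qed

section \<open>Equal and complementary closed neighbourhoods\<close>

text \<open>\<open>p = True\<close>: \<open>x\<close> and \<open>y\<close> are closed twins; \<open>p = False\<close>: their closed
  neighbourhoods partition \<open>V\<close>.\<close>

definition cnbh_match :: "'a set \<Rightarrow> ('a \<Rightarrow> 'a \<Rightarrow> bool) \<Rightarrow> bool \<Rightarrow> 'a \<Rightarrow> 'a \<Rightarrow> bool" where
  "cnbh_match V E p x y \<longleftrightarrow> (\<forall>w\<in>V. E\<^sup>=\<^sup>= x w \<longleftrightarrow> (E\<^sup>=\<^sup>= y w \<longleftrightarrow> p))"

lemma cnbh_match_refl: "cnbh_match V E True x x"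
  unfolding cnbh_match_def by simp

lemma cnbh_match_sym: "cnbh_match V E p x y \<Longrightarrow> cnbh_match V E p y x"
  unfolding cnbh_match_def by auto

lemma cnbh_match_trans: "cnbh_match V E p x y \<Longrightarrow> cnbh_match V E q y z \<Longrightarrow> cnbh_match V E (p \<longleftrightarrow> q) x z"
  unfolding cnbh_match_def by auto

lemma cnbh_matchD: "cnbh_match V E p x y \<Longrightarrow> w \<in> V \<Longrightarrow> E\<^sup>=\<^sup>= x w \<longleftrightarrow> (E\<^sup>=\<^sup>= y w \<longleftrightarrow> p)"
  unfolding cnbh_match_def by blast

lemma reflclp_if_cnbh_match: "cnbh_match V E p x y \<Longrightarrow> y \<in> V \<Longrightarrow> E\<^sup>=\<^sup>= x y \<longleftrightarrow> p"
  unfolding cnbh_match_def by auto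

lemma maximally_distant_if_twins:
  assumes "symp E" "cnbh_match V E True x y" "x \<noteq> y" "y \<in> V"
  shows "maximally_distant V E x y"
  unfolding maximally_distant_def
proof (intro ballI impI)
  fix w assume "w \<in> V" "E x w"
  show "gdist V E w y \<le> gdist V E x y"
  proof (cases "w = y")
    case False
    with \<open>E x w\<close> assms(1,2,4) \<open>w \<in> V\<close> have "w \<in> V \<and> y \<in> V \<and> E w y"
      unfolding cnbh_match_def by (auto dest: sympD)
    hence "gdist V E w y \<le> 1" by (intro gdist_le_1) auto
    also have "\<dots> \<le> gdist V E x y" using assms(3) by (rule gdist_ge_1)
    finally show ?thesis .
  qed simp
qed

lemma gdist_ge_3_if_complements:
  assumes "symp E" "cnbh_match V E False x y" "x \<in> V" "y \<in> V"
  shows "3 \<le> gdist V E x y"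
  using assms unfolding cnbh_match_def by (intro gdist_ge_3) (auto dest: sympD)

lemma strong_resolving_if_cnbh_match:
  assumes "symp E" "strong_resolving V E S"
    and diam: "\<And>a b. a \<in> V \<Longrightarrow> b \<in> V \<Longrightarrow> gdist V E a b \<le> 3"
    and "x \<in> V" "y \<in> V" "x \<noteq> y" "cnbh_match V E p x y"
  shows "x \<in> S \<or> y \<in> S"
proof (rule strong_resolving_mutually_maximally_distant[OF assms(1,2) _ assms(4-6)])
  show "gdist V E a b \<noteq> \<infinity>" if "a \<in> V" "b \<in> V" for a b
    using diam[OF that] by (cases "gdist V E a b") (auto simp: numeral_eq_enat)
  have match: "cnbh_match V E p x y" "cnbh_match V E p y x"
    using assms(7) cnbh_match_sym by auto
  have "maximally_distant V E x y \<and> maximally_distant V E y x"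
  proof (cases p)
    case True
    with match show ?thesis
      using maximally_distant_if_twins[OF assms(1)] assms(4-6) by simp
  next
    case False
    with match have far: "3 \<le> gdist V E x y" "3 \<le> gdist V E y x"
      using gdist_ge_3_if_complements[OF assms(1)] assms(4,5) by simp_all
    have "gdist V E w b \<le> gdist V E a b" if "w \<in> V" "b \<in> V" "3 \<le> gdist V E a b" for w a b
      using diam[OF that(1,2)] that(3) by (rule order_trans)
    with far assms(4,5) show ?thesis unfolding maximally_distant_def by simp
  qed
  thus "maximally_distant V E x y" "maximally_distant V E y x" by auto
qed

lemma gdist_le_2_if_not_complements:
  assumes "symp E" and partner: "\<And>w. w \<in> V \<Longrightarrow> \<exists>w'\<in>V. cnbh_match V E False w w'"
    and "x \<in> V" "y \<in> V" "\<not> cnbh_match V E False x y"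
  shows "gdist V E x y \<le> 2"
proof -
  have sym: "E\<^sup>=\<^sup>= a b \<longleftrightarrow> E\<^sup>=\<^sup>= b a" for a b using assms(1) by (auto dest: sympD)
  txt \<open>Some \<open>a\<close> is closely adjacent to both or to neither; in the latter case its complementary
    partner is a common closed neighbour.\<close>
  from assms(5) obtain a where a: "a \<in> V" "E\<^sup>=\<^sup>= x a \<longleftrightarrow> E\<^sup>=\<^sup>= y a"
    unfolding cnbh_match_def by blast
  show ?thesis
  proof (cases "E\<^sup>=\<^sup>= x a")
    case True
    thus ?thesis using a assms(3,4) sym by (intro gdist_le_2[of x V a]) auto
  next
    case False
    from partner[OF a(1)] obtain a' where "a' \<in> V" "cnbh_match V E False a a'" by blast
    moreover have "\<not> E\<^sup>=\<^sup>= a x" "\<not> E\<^sup>=\<^sup>= a y" using False a(2) sym by auto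
    ultimately show ?thesis using assms(3,4) sym unfolding cnbh_match_def
      by (intro gdist_le_2[of x V a']) auto
  qed
qed

lemma gdist_eq_add_if_complements:
  assumes "symp E" and partner: "\<And>w. w \<in> V \<Longrightarrow> \<exists>w'\<in>V. cnbh_match V E False w w'"
    and "x \<in> V" "y \<in> V" "z \<in> V" "cnbh_match V E False x z"
    and "\<not> E\<^sup>=\<^sup>= x y" "\<not> cnbh_match V E False x y"
  shows "gdist V E x z = gdist V E x y + gdist V E y z"
proof -
  have far: "3 \<le> gdist V E x z" by (rule gdist_ge_3_if_complements[OF assms(1,6,3,5)])
  have "E\<^sup>=\<^sup>= z y" using cnbh_matchD[OF assms(6,4)] assms(7) by simp
  hence "E\<^sup>=\<^sup>= y z" using assms(1) by (auto dest: sympD)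
  with assms(4,5) have near: "gdist V E y z \<le> 1" by (rule gdist_le_1)
  have mid: "gdist V E x y \<le> 2" by (rule gdist_le_2_if_not_complements[OF assms(1) partner assms(3,4,8)])
  have "gdist V E x y + gdist V E y z \<le> 2 + 1" using mid near by (rule add_mono)
  with far have "gdist V E x y + gdist V E y z \<le> gdist V E x z" by simp
  thus ?thesis using gdist_triangle by (rule antisym[rotated])
qed

section \<open>The parts \<open>T\<^sub>j(H)\<close> as equivalence classes\<close>

definition T_rel :: "'a set \<Rightarrow> ('a \<Rightarrow> 'a \<Rightarrow> bool) \<Rightarrow> ('a \<times> 'a) set" where
  "T_rel V E = {(u, v). u \<in> V \<and> v \<in> V \<and> (\<exists>p. cnbh_match V E p u v)}"

lemma equiv_T_rel: "equiv V (T_rel V E)"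
proof (rule equivI)
  show "refl_on V (T_rel V E)" unfolding T_rel_def refl_on_def using cnbh_match_refl by fast
  show "sym (T_rel V E)" unfolding T_rel_def sym_def by (auto dest: cnbh_match_sym)
  show "trans (T_rel V E)" unfolding T_rel_def trans_def by (auto dest: cnbh_match_trans)
qed (auto simp: T_rel_def)

lemma T_rel_Image: "h \<in> V \<Longrightarrow> T_rel V E `` {h} = {v \<in> V. \<exists>p. cnbh_match V E p h v}"
  unfolding T_rel_def by auto

lemma mem_cnbh_iff: "u \<in> V \<Longrightarrow> t \<in> V \<Longrightarrow> t \<in> cnbh V E u \<longleftrightarrow> E\<^sup>=\<^sup>= u t"
  unfolding cnbh_def by auto

lemma cnbh_subset: "u \<in> V \<Longrightarrow> cnbh V E u \<subseteq> V"
  unfolding cnbh_def by auto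

lemma cnbh_eq_iff_cnbh_match:
  assumes "u \<in> V" "v \<in> V"
  shows "cnbh V E u = cnbh V E v \<longleftrightarrow> cnbh_match V E True u v"
proof -
  have "cnbh V E u = cnbh V E v \<longleftrightarrow> (\<forall>w\<in>V. w \<in> cnbh V E u \<longleftrightarrow> w \<in> cnbh V E v)"
    using cnbh_subset[OF assms(1), of E] cnbh_subset[OF assms(2), of E] by auto
  thus ?thesis unfolding cnbh_match_def using assms by (simp add: mem_cnbh_iff)
qed

lemma gamma_pair_iff_cnbh_match:
  "gamma_pair V E u v \<longleftrightarrow> u \<in> V \<and> v \<in> V \<and> cnbh_match V E False u v"
proof (cases "u \<in> V \<and> v \<in> V")
  case True
  hence "cnbh V E u \<inter> cnbh V E v = {} \<and> cnbh V E u \<union> cnbh V E v = V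
      \<longleftrightarrow> (\<forall>w\<in>V. w \<in> cnbh V E u \<longleftrightarrow> w \<notin> cnbh V E v)"
    using cnbh_subset[of u V E] cnbh_subset[of v V E] by auto
  also have "\<dots> \<longleftrightarrow> cnbh_match V E False u v"
    unfolding cnbh_match_def using True by (simp add: mem_cnbh_iff)
  finally show ?thesis
    using True reflclp_if_cnbh_match[of V E False u v] unfolding gamma_pair_def by auto
qed (auto simp: gamma_pair_def)

lemma twin_class_eq: "h \<in> V \<Longrightarrow> twin_class V E h = {v \<in> V. cnbh_match V E True h v}"
proof -
  assume "h \<in> V"
  have "cnbh V E v = cnbh V E h \<longleftrightarrow> cnbh_match V E True h v" if "v \<in> V" for v
    using cnbh_eq_iff_cnbh_match[OF that \<open>h \<in> V\<close>] cnbh_match_sym by metis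
  thus ?thesis unfolding twin_class_def by (intro Collect_cong) auto
qed

lemma T_rel_Image_if_no_gamma_pair:
  assumes "h \<in> V" "\<not> (\<exists>h'. gamma_pair V E h h')"
  shows "T_rel V E `` {h} = twin_class V E h"
proof -
  have "\<not> cnbh_match V E False h v" if "v \<in> V" for v
    using that assms gamma_pair_iff_cnbh_match[of V E h v] by simp
  thus ?thesis by (auto simp: ex_bool_eq T_rel_Image[OF assms(1)] twin_class_eq[OF assms(1)])
qed

lemma T_rel_Image_if_gamma_pair:
  assumes "gamma_pair V E h h'"
  shows "T_rel V E `` {h} = twin_class V E h \<union> twin_class V E h'"
proof -
  from assms have hh': "h \<in> V" "h' \<in> V" "cnbh_match V E False h h'"
    by (simp_all add: gamma_pair_iff_cnbh_match)
  have "cnbh_match V E False h v \<longleftrightarrow> cnbh_match V E True h' v" for v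
    using cnbh_match_trans[OF hh'(3), of True v] cnbh_match_trans[OF cnbh_match_sym[OF hh'(3)], of False v]
    by auto
  thus ?thesis
    by (auto simp: ex_bool_eq T_rel_Image[OF hh'(1)] twin_class_eq[OF hh'(1)] twin_class_eq[OF hh'(2)])
qed

lemma T_parts_eq_quotient: "T_parts V E = V // T_rel V E"
proof
  show "T_parts V E \<subseteq> V // T_rel V E"
  proof
    fix T assume "T \<in> T_parts V E"
    then consider h where "h \<in> V" "\<not> (\<exists>h'. gamma_pair V E h h')" "T = twin_class V E h"
      | h h' where "gamma_pair V E h h'" "T = twin_class V E h \<union> twin_class V E h'"
      unfolding T_parts_def by blast
    thus "T \<in> V // T_rel V E"
      by cases (metis T_rel_Image_if_no_gamma_pair T_rel_Image_if_gamma_pair gamma_pair_def quotientI)+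
  qed
  show "V // T_rel V E \<subseteq> T_parts V E"
  proof
    fix X assume "X \<in> V // T_rel V E"
    then obtain h where h: "h \<in> V" "X = T_rel V E `` {h}" by (rule quotientE)
    show "X \<in> T_parts V E"
    proof (cases "\<exists>h'. gamma_pair V E h h'")
      case True
      then obtain h' where "gamma_pair V E h h'" ..
      thus ?thesis unfolding T_parts_def h(2) T_rel_Image_if_gamma_pair[OF \<open>gamma_pair V E h h'\<close>] by blast
    next
      case False
      thus ?thesis unfolding T_parts_def h(2) T_rel_Image_if_no_gamma_pair[OF h(1) False] using h(1) by blast
    qed
  qed
qed

lemma sum_card_quotient: "finite A \<Longrightarrow> equiv A r \<Longrightarrow> (\<Sum>X\<in>A // r. card X) = card A"
  using product_partition[OF partition_on_quotient] finite_equiv_class[OF _ equiv_type] by metis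

lemma exists_transversal:
  assumes "equiv A r"
  obtains U where "U \<subseteq> A" "\<And>u v. u \<in> U \<Longrightarrow> v \<in> U \<Longrightarrow> (u, v) \<in> r \<Longrightarrow> u = v" "card U = card (A // r)"
proof -
  define cls where "cls u = r `` {u}" for u
  define U where "U = inv_into A cls ` (A // r)"
  have quot: "A // r = cls ` A" unfolding cls_def quotient_def by auto
  show thesis
  proof
    show "U \<subseteq> A" unfolding U_def quot by (auto intro: inv_into_into)
    show "card U = card (A // r)" unfolding U_def quot by (intro card_image inj_on_inv_into) simp
    fix u v assume "u \<in> U" "v \<in> U" "(u, v) \<in> r"
    then obtain T T' where "T \<in> cls ` A" "T' \<in> cls ` A" "u = inv_into A cls T" "v = inv_into A cls T'"
      unfolding U_def quot by blast
    moreover have "cls u = cls v" unfolding cls_def using equiv_class_eq[OF assms \<open>(u, v) \<in> r\<close>] .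
    ultimately show "u = v" by (simp add: f_inv_into_f)
  qed
qed

section \<open>The modular product with \<open>K\<^sub>n\<^sub>,\<^sub>n\<close> minus a perfect matching\<close>

lemma reflclp_mod_prod_adj:
  "(mod_prod_adj EG EH)\<^sup>=\<^sup>= (g, h) (g', h') \<longleftrightarrow> (EG\<^sup>=\<^sup>= g g' \<longleftrightarrow> EH\<^sup>=\<^sup>= h h')"
  unfolding mod_prod_adj_def by auto

lemma symp_mod_prod_adj: "symp EG \<Longrightarrow> symp EH \<Longrightarrow> symp (mod_prod_adj EG EH)"
  unfolding mod_prod_adj_def symp_def by auto

lemma cnbh_match_mod_prod:
  assumes "cnbh_match VG EG p g g'" "cnbh_match VH EH q h h'"
  shows "cnbh_match (VG \<times> VH) (mod_prod_adj EG EH) (p \<longleftrightarrow> q) (g, h) (g', h')"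
  unfolding cnbh_match_def
proof (intro ballI, clarify)
  fix a b assume "a \<in> VG" "b \<in> VH"
  with assms have "EG\<^sup>=\<^sup>= g a \<longleftrightarrow> (EG\<^sup>=\<^sup>= g' a \<longleftrightarrow> p)" "EH\<^sup>=\<^sup>= h b \<longleftrightarrow> (EH\<^sup>=\<^sup>= h' b \<longleftrightarrow> q)"
    unfolding cnbh_match_def by blast+
  thus "(mod_prod_adj EG EH)\<^sup>=\<^sup>= (g, h) (a, b) \<longleftrightarrow> ((mod_prod_adj EG EH)\<^sup>=\<^sup>= (g', h') (a, b) \<longleftrightarrow> (p \<longleftrightarrow> q))"
    unfolding reflclp_mod_prod_adj by argo
qed

lemma mem_Knn_M_verts [simp]: "(i, b) \<in> Knn_M_verts n \<longleftrightarrow> i < n"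
  unfolding Knn_M_verts_def by auto

lemma reflclp_Knn_M_adj:
  "i < n \<Longrightarrow> j < n \<Longrightarrow> (Knn_M_adj n)\<^sup>=\<^sup>= (i, b) (j, c) \<longleftrightarrow> (i = j \<longleftrightarrow> b = c)"
  unfolding Knn_M_adj_def by auto

lemma symp_Knn_M_adj: "symp (Knn_M_adj n)"
  unfolding Knn_M_adj_def symp_def by auto

lemma cnbh_match_Knn_M:
  "i < n \<Longrightarrow> cnbh_match (Knn_M_verts n) (Knn_M_adj n) (b = c) (i, b) (i, c)"
  unfolding cnbh_match_def Knn_M_verts_def Knn_M_adj_def by auto

lemma exists_index_avoiding:
  assumes "3 \<le> (n::nat)" obtains l where "l < n" "l \<noteq> i" "l \<noteq> j"
proof -
  have "\<exists>l<3::nat. l \<noteq> i \<and> l \<noteq> j" by presburger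
  then obtain l where "l < 3" "l \<noteq> i" "l \<noteq> j" by blast
  with assms show thesis by (intro that[of l]) simp_all
qed

lemma exists_index_pair:
  assumes "3 \<le> (n::nat)"
  obtains l m where "l < n" "m < n" "l \<noteq> i" "m \<noteq> j" "l = m \<longleftrightarrow> P"
proof -
  obtain l where l: "l < n" "l \<noteq> i" "l \<noteq> j" using exists_index_avoiding[OF assms] .
  obtain m where m: "m < n" "m \<noteq> j" "m \<noteq> l" using exists_index_avoiding[OF assms] .
  show thesis
  proof (cases P)
    case True
    with l show thesis by (intro that[of l l]) simp_all
  next
    case False
    with l m show thesis by (intro that[of l m]) simp_all
  qed
qed

locale Knn_M_mod_prod =
  fixes n :: nat and VH :: "'a set" and EH :: "'a \<Rightarrow> 'a \<Rightarrow> bool"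
  assumes three_le_n: "3 \<le> n" and simple: "simple_graph VH EH"
begin

abbreviation "V \<equiv> Knn_M_verts n \<times> VH"
abbreviation "E \<equiv> mod_prod_adj (Knn_M_adj n) EH"

lemma symp_E: "symp E"
  using simple unfolding simple_graph_def
  by (intro symp_mod_prod_adj symp_Knn_M_adj) (auto intro: sympI)

lemma finite_V: "finite V"
  using simple unfolding Knn_M_verts_def simple_graph_def by simp

lemma card_V: "card V = 2 * n * card VH"
  unfolding Knn_M_verts_def by (simp add: card_cartesian_product)

lemma reflclp_E:
  assumes "i < n" "j < n"
  shows "E\<^sup>=\<^sup>= ((i, b), u) ((j, c), v) \<longleftrightarrow> ((i = j \<longleftrightarrow> b = c) \<longleftrightarrow> EH\<^sup>=\<^sup>= u v)"
  unfolding reflclp_mod_prod_adj using reflclp_Knn_M_adj[OF assms, of b c] by simp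

lemma reflclp_E_cross:
  "i < n \<Longrightarrow> l < n \<Longrightarrow> l \<noteq> i \<Longrightarrow> E\<^sup>=\<^sup>= ((i, b), u) ((l, \<not> b), t) \<longleftrightarrow> EH\<^sup>=\<^sup>= u t"
  using reflclp_E[of i l b u "\<not> b" t] by simp

lemma diameter_le_3:
  assumes "x \<in> V" "y \<in> V" shows "gdist V E x y \<le> 3"
proof -
  obtain i b u j c v where xy: "x = ((i, b), u)" "y = ((j, c), v)" using prod.exhaust by metis
  with assms have V: "i < n" "j < n" "u \<in> VH" "v \<in> VH" by auto
  obtain l m where lm: "l < n" "m < n" "l \<noteq> i" "m \<noteq> j" "l = m \<longleftrightarrow> (b = c \<longleftrightarrow> EH\<^sup>=\<^sup>= u v)"
    by (rule exists_index_pair[OF three_le_n])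
  have "E\<^sup>=\<^sup>= ((j, c), v) ((m, \<not> c), v)" using V lm reflclp_E_cross[of j m c v v] by simp
  hence "E\<^sup>=\<^sup>= ((m, \<not> c), v) ((j, c), v)" using symp_E by (auto dest: sympD)
  moreover have "E\<^sup>=\<^sup>= ((i, b), u) ((l, \<not> b), u)" using V lm reflclp_E_cross[of i l b u u] by simp
  moreover have "E\<^sup>=\<^sup>= ((l, \<not> b), u) ((m, \<not> c), v)" using reflclp_E[of l m "\<not> b" u "\<not> c" v] lm by argo
  ultimately show ?thesis
    unfolding xy using V lm by (intro gdist_le_3[of _ V "((l, \<not> b), u)" "((m, \<not> c), v)"]) auto
qed

lemma cnbh_match_antipode: "i < n \<Longrightarrow> cnbh_match V E False ((i, b), u) ((i, \<not> b), u)"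
  using cnbh_match_mod_prod[OF cnbh_match_Knn_M[of i n b "\<not> b"] cnbh_match_refl[of VH EH u]] by simp

lemma exists_antipode: "w \<in> V \<Longrightarrow> \<exists>w'\<in>V. cnbh_match V E False w w'"
  using cnbh_match_antipode by (cases w) force

lemma cnbh_match_fibre:
  assumes "i < n" "j < n" "cnbh_match V E p ((i, b), u) ((j, b), v)"
  shows "cnbh_match VH EH p u v"
  unfolding cnbh_match_def
proof
  fix t assume "t \<in> VH"
  obtain l where l: "l < n" "l \<noteq> i" "l \<noteq> j" using exists_index_avoiding[OF three_le_n] .
  with assms(3) \<open>t \<in> VH\<close> have "E\<^sup>=\<^sup>= ((i, b), u) ((l, \<not> b), t) \<longleftrightarrow> (E\<^sup>=\<^sup>= ((j, b), v) ((l, \<not> b), t) \<longleftrightarrow> p)"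
    by (intro cnbh_matchD) auto
  with assms(1,2) l show "EH\<^sup>=\<^sup>= u t \<longleftrightarrow> (EH\<^sup>=\<^sup>= v t \<longleftrightarrow> p)"
    using reflclp_E_cross[of i l b u t] reflclp_E_cross[of j l b v t] by simp
qed

lemma card_V_le_strong_resolving:
  assumes S: "strong_resolving V E S"
  shows "card V \<le> card S + n * card (VH // T_rel VH EH)"
proof -
  define layer where "layer x = (fst (fst x), T_rel VH EH `` {snd x})" for x :: "(nat \<times> bool) \<times> 'a"
  have "inj_on layer (V - S)"
  proof (rule inj_onI, rule ccontr)
    fix x y assume xy: "x \<in> V - S" "y \<in> V - S" "layer x = layer y" "x \<noteq> y"
    obtain i b u j c v where x: "x = ((i, b), u)" and y: "y = ((j, c), v)" using prod.exhaust by metis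
    with xy have "j = i" "i < n" "u \<in> VH" "v \<in> VH" "T_rel VH EH `` {u} = T_rel VH EH `` {v}"
      unfolding layer_def by auto
    hence "(u, v) \<in> T_rel VH EH" by (simp add: eq_equiv_class_iff[OF equiv_T_rel])
    then obtain q where "cnbh_match VH EH q u v" unfolding T_rel_def by auto
    with cnbh_match_Knn_M[OF \<open>i < n\<close>, of b c] have "cnbh_match V E (b = c \<longleftrightarrow> q) x y"
      unfolding x y \<open>j = i\<close> by (rule cnbh_match_mod_prod)
    with xy have "x \<in> S \<or> y \<in> S"
      by (intro strong_resolving_if_cnbh_match[OF symp_E S diameter_le_3]) auto
    with xy show False by blast
  qed
  moreover have "layer ` (V - S) \<subseteq> {..<n} \<times> VH // T_rel VH EH"
    unfolding layer_def by (auto intro: quotientI)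
  moreover have "finite (VH // T_rel VH EH)"
    using simple finite_quotient[OF _ equiv_type[OF equiv_T_rel]] unfolding simple_graph_def by blast
  ultimately have "card (V - S) \<le> card ({..<n} \<times> VH // T_rel VH EH)"
    by (metis card_image card_mono finite_SigmaI finite_lessThan)
  hence "card (V - S) \<le> n * card (VH // T_rel VH EH)" by (simp add: card_cartesian_product)
  moreover have "S \<subseteq> V" using S unfolding strong_resolving_def by blast
  ultimately show ?thesis using card_Diff_subset[OF finite_subset[OF _ finite_V]] by auto
qed

lemma exists_geodesic_to_other_side:
  assumes "i < n" "j < n" "u \<in> VH" "v \<in> VH" "((i, b), u) \<noteq> ((j, b), v)"
    and "u = v \<or> (u, v) \<notin> T_rel VH EH"
  obtains l t where "l < n" "t \<in> VH"
    "gdist V E ((j, b), v) ((l, \<not> b), t) = gdist V E ((j, b), v) ((i, b), u) + gdist V E ((i, b), u) ((l, \<not> b), t)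
     \<or> gdist V E ((i, b), u) ((l, \<not> b), t) = gdist V E ((i, b), u) ((j, b), v) + gdist V E ((j, b), v) ((l, \<not> b), t)"
proof -
  let ?x = "((i, b), u)" and ?y = "((j, b), v)"
  have V: "?x \<in> V" "?y \<in> V" using assms(1-4) by auto
  txt \<open>If \<open>x \<sim> y\<close>, a vertex \<open>t\<close> separating \<open>N[u]\<close> from \<open>N[v]\<close> yields \<open>z\<close> adjacent to exactly
    one of them; otherwise \<open>z\<close> is the antipode \<open>((i, \<not> b), u)\<close> of \<open>x\<close>.\<close>
  show thesis
  proof (cases "E ?x ?y")
    case adjacent: True
    have "u \<noteq> v"
    proof
      assume "u = v"
      with adjacent reflclp_E[OF assms(1,2), of b u b v] have "i = j" by auto
      with \<open>u = v\<close> assms(5) show False by simp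
    qed
    with assms(3,4,6) have "\<not> cnbh_match VH EH True u v" unfolding T_rel_def by auto
    then obtain t where t: "t \<in> VH" "\<not> (EH\<^sup>=\<^sup>= u t \<longleftrightarrow> EH\<^sup>=\<^sup>= v t)"
      unfolding cnbh_match_def by auto
    obtain l where l: "l < n" "l \<noteq> i" "l \<noteq> j" using exists_index_avoiding[OF three_le_n] .
    let ?z = "((l, \<not> b), t)"
    have z: "?z \<in> V" "?z \<noteq> ?x" "?z \<noteq> ?y" using l t by auto
    have xz: "E\<^sup>=\<^sup>= ?x ?z \<longleftrightarrow> EH\<^sup>=\<^sup>= u t" and yz: "E\<^sup>=\<^sup>= ?y ?z \<longleftrightarrow> EH\<^sup>=\<^sup>= v t"
      by (rule reflclp_E_cross[OF assms(1) l(1,2)], rule reflclp_E_cross[OF assms(2) l(1,3)])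
    show thesis
    proof (cases "EH\<^sup>=\<^sup>= u t")
      case True
      with t(2) xz yz z have "E ?x ?z" "\<not> E\<^sup>=\<^sup>= ?y ?z" by auto
      with V z(1) adjacent have "gdist V E ?y ?z = gdist V E ?y ?x + gdist V E ?x ?z"
        by (intro gdist_eq_add_if_adjacent[OF symp_E])
      with l t show thesis by (intro that) auto
    next
      case False
      with t(2) xz yz z have "E ?y ?z" "\<not> E\<^sup>=\<^sup>= ?x ?z" by auto
      moreover have "E ?y ?x" using adjacent symp_E by (rule sympD[rotated])
      ultimately have "gdist V E ?x ?z = gdist V E ?x ?y + gdist V E ?y ?z"
        using V z(1) by (intro gdist_eq_add_if_adjacent[OF symp_E])
      with l t show thesis by (intro that) auto
    qed
  next
    case False
    with assms(5) have "\<not> E\<^sup>=\<^sup>= ?x ?y" by simp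
    moreover have "\<not> cnbh_match V E False ?x ?y"
    proof
      assume "cnbh_match V E False ?x ?y"
      hence "cnbh_match VH EH False u v" by (rule cnbh_match_fibre[OF assms(1,2)])
      moreover from this have "u \<noteq> v" using reflclp_if_cnbh_match[OF _ assms(4)] by auto
      ultimately show False using assms(3,4,6) unfolding T_rel_def by auto
    qed
    ultimately have "gdist V E ?x ((i, \<not> b), u) = gdist V E ?x ?y + gdist V E ?y ((i, \<not> b), u)"
      using V assms(1,3) cnbh_match_antipode
      by (intro gdist_eq_add_if_complements[OF symp_E exists_antipode]) auto
    with assms(1,3) show thesis by (intro that) auto
  qed
qed

lemma strong_resolving_Diff_transversal:
  assumes "U \<subseteq> VH" and transversal: "\<And>u v. u \<in> U \<Longrightarrow> v \<in> U \<Longrightarrow> (u, v) \<in> T_rel VH EH \<Longrightarrow> u = v"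
  shows "strong_resolving V E (V - ({..<n} \<times> {True}) \<times> U)"
  unfolding strong_resolving_def
proof (intro conjI ballI impI)
  let ?R = "({..<n} \<times> {True}) \<times> U"
  fix x y assume xy: "x \<in> V" "y \<in> V" "x \<noteq> y"
  show "\<exists>z\<in>V - ?R. gdist V E y z = gdist V E y x + gdist V E x z
                 \<or> gdist V E x z = gdist V E x y + gdist V E y z"
  proof (cases "x \<in> ?R \<and> y \<in> ?R")
    case True
    then obtain i j u v where x: "x = ((i, True), u)" and y: "y = ((j, True), v)"
      and "i < n" "j < n" "u \<in> U" "v \<in> U" by auto
    moreover from this transversal have "u = v \<or> (u, v) \<notin> T_rel VH EH" by blast
    ultimately obtain l t where "l < n" "t \<in> VH"
      "gdist V E y ((l, \<not> True), t) = gdist V E y x + gdist V E x ((l, \<not> True), t)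
       \<or> gdist V E x ((l, \<not> True), t) = gdist V E x y + gdist V E y ((l, \<not> True), t)"
      using exists_geodesic_to_other_side[of i j u v True] assms(1) xy(3) by blast
    thus ?thesis by (intro bexI[of _ "((l, \<not> True), t)"]) auto
  next
    case False
    with xy show ?thesis by (auto intro: bexI[of _ x] bexI[of _ y])
  qed
qed blast

lemma strong_metric_dim_add: "strong_metric_dim V E + n * card (VH // T_rel VH EH) = card V"
proof -
  obtain U where U: "U \<subseteq> VH" "\<And>u v. u \<in> U \<Longrightarrow> v \<in> U \<Longrightarrow> (u, v) \<in> T_rel VH EH \<Longrightarrow> u = v"
    and card_U: "card U = card (VH // T_rel VH EH)"
    using exists_transversal[OF equiv_T_rel[of VH EH]] by blast
  let ?R = "({..<n} \<times> {True}) \<times> U"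
  have R: "?R \<subseteq> V" and card_R: "card ?R = n * card (VH // T_rel VH EH)"
    using U(1) card_U by (auto simp: card_cartesian_product)
  have "strong_metric_dim V E = card V - n * card (VH // T_rel VH EH)"
    unfolding strong_metric_dim_def
  proof (rule Least_equality)
    show "\<exists>S. strong_resolving V E S \<and> card S = card V - n * card (VH // T_rel VH EH)"
      using strong_resolving_Diff_transversal[OF U] card_Diff_subset[OF finite_subset[OF R finite_V] R] card_R
      by (intro exI) simp
    show "card V - n * card (VH // T_rel VH EH) \<le> k" if "\<exists>S. strong_resolving V E S \<and> card S = k" for k
      using that card_V_le_strong_resolving by fastforce
  qed
  moreover have "n * card (VH // T_rel VH EH) \<le> card V"
    using card_mono[OF finite_V R] card_R by simp
  ultimately show ?thesis by simp
qed

end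

theorem mainTheorem12:
  fixes n :: nat and VH :: "'a set" and EH :: "'a \<Rightarrow> 'a \<Rightarrow> bool"
  assumes "n \<ge> 3"
    and "simple_graph VH EH"
    and "\<not> (\<exists>h\<in>VH. universal VH EH h)"
  shows "int (strong_metric_dim (Knn_M_verts n \<times> VH) (mod_prod_adj (Knn_M_adj n) EH))
     = 2 * int n * (\<Sum>T\<in>T_parts VH EH. int (card T)) - int n * int (card (T_parts VH EH))"
proof -
  interpret Knn_M_mod_prod n VH EH using assms(1,2) by unfold_locales
  have "finite VH" using assms(2) unfolding simple_graph_def by blast
  hence "(\<Sum>T\<in>T_parts VH EH. int (card T)) = int (card VH)"
    unfolding T_parts_eq_quotient of_nat_sum[symmetric] by (simp add: sum_card_quotient equiv_T_rel)
  moreover have "int (strong_metric_dim V E) + int n * int (card (T_parts VH EH)) = 2 * int n * int (card VH)"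
    using arg_cong[OF strong_metric_dim_add, of int] card_V unfolding T_parts_eq_quotient by simp
  ultimately show ?thesis by (simp add: algebra_simps)
qed

end
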